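(* Assume the setting and Hypotheses (H1)--(H5) of the context. Define, for $V\in\mathcal{D}$ and $0\le\mu\le\mu_0$, \[ \hat F(V,\mu):=L_0V-\chi_1^*[V]\chi_0+\mu\left(L_1(\mu)V-\chi_0^*[L_1(\mu)V]\chi_0\right)+Q(V,\mu)-\chi_0^*[Q(V,\mu)]\chi_0 . \] Then $DJ_\mu(V)\hat F(V,\mu)=0$ for all $V\in\hat{\mathcal{D}}:=\{V\in\mathcal{D}:\chi_0^*[V]=0\}$.
   Context: Setting. $\mathcal{D}\subseteq\mathcal{X}$ are real Banach spaces with $\mathcal{D}$ continuously embedded in $\mathcal{X}$; spectral notions refer to the complexifications, with $L_0\in\mathcal{B}(\mathcal{D},\mathcal{X})$ regarded as an operator in $\mathcal{X}$ with domain $\mathcal{D}$; $\mu_0>0$. (H1) $F(U,\mu)=L_0U+\mu L_1(\mu)U+Q(U,\mu)$ with $L_0\in\mathcal{B}(\mathcal{D},\mathcal{X})$, and $L_1:[0,\mu_0]\to\mathcal{B}(\mathcal{D},\mathcal{X})$, $Q:\mathcal{X}\times[0,\mu_0]\to\mathcal{X}$ analytic, $Q(0,\mu)=0$, $D_UQ(0,\mu)=0$. (H2) $\mathcal{S}\in\mathcal{B}(\mathcal{X})$, $\mathcal{S}^2=I$, $\|\mathcal{S}\|=1$, $\mathcal{S}L_0=-L_0\mathcal{S}$, $\mathcal{S}L_1(\mu)=-L_1(\mu)\mathcal{S}$, $Q(\mathcal{S}U,\mu)=-\mathcal{S}Q(U,\mu)$ for $U\in\mathcal{D}$. (H3) For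 some $\omega>0$, $\sigma(L_0)\cap i\mathbb{R}=\{0,\pm i\omega\}$, all geometrically simple eigenvalues, $0$ of algebraic multiplicity $4$, $\pm i\omega$ of algebraic multiplicity $1$, and $|\mathrm{Re}\lambda|\ge\lambda_0>0$ for $\lambda\in\sigma(L_0)\setminus i\mathbb{R}$. (H4) The spectral projection of $L_0$ for the eigenvalue $0$ is $\Pi_0U=\sum_{k=0}^3\chi_k^*[U]\chi_k$ with $\chi_k\in\mathcal{D}$, $L_0\chi_0=0$, $L_0\chi_{k+1}=\chi_k$ ($k=0,1,2$), $\chi_k^*\in\mathcal{X}^*$; and (i) $L_1(\mu)\chi_0=0$, (ii) $Q(U+\gamma\chi_0,\mu)=Q(U,\mu)$ for $U\in\mathcal{D}$, $\gamma\in\mathbb{R}$, (iii) $\mathcal{S}\chi_k=(-1)^{k+1}\chi_k$. (H5) For each $\mu$, $J_\mu:\mathcal{X}\to\mathbb{R}$ with: $(U,\mu)\mapsto J_\mu(U)$ analytic; $DJ_\mu(U)F(U,\mu)=0$ for $U\in\mathcal{D}$; $J_\mu(\mathcal{S}U)=J_\mu(U)$; $J_0(0)=0$ and there is analytic $\mu\mapsto\mathscr{J}_*(\mu)\in\mathcal{X}^*$ with $J_\mu(U)-J_0(U)=\mu\mathscr{J}_*(\mu)U$ for $U\in\mathcal{D}$; $J_\mu(U+\gamma\chi_0)=J_\mu(U)$ for $U\in\mathcal{D}$, $\gamma\in\mathbb{R}$; $\chi_3^*[U]=DJ_0(0)U$. *)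

theory Defs
  imports "HOL-Analysis.Analysis"
begin

text \<open>A bounded n-linear map, represented as a function of an argument sequence
  that depends only on its first n entries, is linear in each of them, and is bounded.\<close>
definition bmultilin :: "nat \<Rightarrow> ((nat \<Rightarrow> 'a::real_normed_vector) \<Rightarrow> 'b::real_normed_vector) \<Rightarrow> bool" where
  "bmultilin n M \<longleftrightarrow>
     (\<forall>v w. (\<forall>i<n. v i = w i) \<longrightarrow> M v = M w) \<and>
     (\<forall>i<n. \<forall>v. linear (\<lambda>x. M (v(i := x)))) \<and>
     (\<exists>C. \<forall>v. norm (M v) \<le> C * (\<Prod>i<n. norm (v i)))"

definition analytic_at_within ::
  "('a::real_normed_vector \<Rightarrow> 'b::real_normed_vector) \<Rightarrow> 'a set \<Rightarrow> 'a \<Rightarrow> bool" where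
  "analytic_at_within f S p \<longleftrightarrow>
     (\<exists>M :: nat \<Rightarrow> (nat \<Rightarrow> 'a) \<Rightarrow> 'b. \<exists>C :: nat \<Rightarrow> real. \<exists>r>0.
        (\<forall>n. bmultilin n (M n)) \<and>
        (\<forall>n v. norm (M n v) \<le> C n * (\<Prod>i<n. norm (v i))) \<and>
        summable (\<lambda>n. C n * r ^ n) \<and>
        (\<forall>h. norm h < r \<and> p + h \<in> S \<longrightarrow> (\<lambda>n. M n (\<lambda>_. h)) sums f (p + h)))"

definition ban_analytic_on :: "'a set \<Rightarrow> ('a::real_normed_vector \<Rightarrow> 'b::real_normed_vector) \<Rightarrow> bool" where
  "ban_analytic_on S f \<longleftrightarrow> (\<forall>p\<in>S. analytic_at_within f S p)"

text \<open>The complexification of a real space 'a is modelled as 'a \<times> 'a, (x,y) = x + i y.\<close>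
definition cmul :: "complex \<Rightarrow> ('a::real_vector \<times> 'a) \<Rightarrow> 'a \<times> 'a" where
  "cmul c u = (Re c *\<^sub>R fst u - Im c *\<^sub>R snd u, Im c *\<^sub>R fst u + Re c *\<^sub>R snd u)"

definition cpl :: "('a \<Rightarrow> 'b) \<Rightarrow> 'a \<times> 'a \<Rightarrow> 'b \<times> 'b" where
  "cpl f u = (f (fst u), f (snd u))"

text \<open>lambda - L as a map from the complexified domain D_C to the complexified space X_C,
  where iota : D \<rightarrow> X is the continuous embedding.\<close>
definition shiftop :: "('d::real_vector \<Rightarrow> 'x::real_vector) \<Rightarrow> ('d \<Rightarrow> 'x) \<Rightarrow> complex \<Rightarrow> 'd \<times> 'd \<Rightarrow> 'x \<times> 'x" where
  "shiftop \<iota> L z u = cmul z (cpl \<iota> u) - cpl L u"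

text \<open>Spectrum of L regarded as operator in X with domain D (bounded inverse is automatic
  for bijective closed maps between Banach spaces).\<close>
definition cspec :: "('d::real_vector \<Rightarrow> 'x::real_vector) \<Rightarrow> ('d \<Rightarrow> 'x) \<Rightarrow> complex set" where
  "cspec \<iota> L = {z. \<not> bij (shiftop \<iota> L z)}"

definition is_eigenvalue :: "('d::real_vector \<Rightarrow> 'x::real_vector) \<Rightarrow> ('d \<Rightarrow> 'x) \<Rightarrow> complex \<Rightarrow> bool" where
  "is_eigenvalue \<iota> L z \<longleftrightarrow> (\<exists>u. u \<noteq> 0 \<and> shiftop \<iota> L z u = 0)"

definition geom_simple :: "('d::real_vector \<Rightarrow> 'x::real_vector) \<Rightarrow> ('d \<Rightarrow> 'x) \<Rightarrow> complex \<Rightarrow> bool" where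
  "geom_simple \<iota> L z \<longleftrightarrow>
     (\<exists>u. u \<noteq> 0 \<and> shiftop \<iota> L z u = 0 \<and>
        (\<forall>v. shiftop \<iota> L z v = 0 \<longrightarrow> (\<exists>c. v = cmul c u)))"

text \<open>u lies in the kernel of (lambda - L)^k (with the natural domain of the power)\<close>
fun gker :: "('d::real_vector \<Rightarrow> 'x::real_vector) \<Rightarrow> ('d \<Rightarrow> 'x) \<Rightarrow> complex \<Rightarrow> nat \<Rightarrow> 'd \<times> 'd \<Rightarrow> bool" where
  "gker \<iota> L z 0 u \<longleftrightarrow> u = 0"
| "gker \<iota> L z (Suc k) u \<longleftrightarrow> (\<exists>w. cpl \<iota> w = shiftop \<iota> L z u \<and> gker \<iota> L z k w)"

definition alg_mult :: "('d::real_vector \<Rightarrow> 'x::real_vector) \<Rightarrow> ('d \<Rightarrow> 'x) \<Rightarrow> complex \<Rightarrow> nat \<Rightarrow> bool" where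
  "alg_mult \<iota> L z m \<longleftrightarrow>
     (\<exists>b :: nat \<Rightarrow> 'd \<times> 'd.
        (\<forall>u. (\<exists>k. gker \<iota> L z k u) \<longleftrightarrow> (\<exists>c :: nat \<Rightarrow> complex. u = (\<Sum>j<m. cmul (c j) (b j)))) \<and>
        (\<forall>c :: nat \<Rightarrow> complex. (\<Sum>j<m. cmul (c j) (b j)) = 0 \<longrightarrow> (\<forall>j<m. c j = 0)))"

definition cres :: "('d::real_vector \<Rightarrow> 'x::real_vector) \<Rightarrow> ('d \<Rightarrow> 'x) \<Rightarrow> complex \<Rightarrow> 'x \<times> 'x \<Rightarrow> 'd \<times> 'd" where
  "cres \<iota> L z v = (THE u. shiftop \<iota> L z u = v)"

text \<open>P is the (Riesz) spectral projection of L for the isolated eigenvalue 0: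
  P u = (2 pi i)^{-1} \<ointegral>_{|lambda|=r} (lambda - L)^{-1} u d lambda for every radius r such that
  0 is the only spectral point in the closed disc of radius r; with lambda = r e^{it} this is
  (2 pi)^{-1} \<integral>_0^{2 pi} r e^{it} (lambda - L)^{-1} u dt.\<close>
definition is_spectral_proj0 ::
  "('d::real_normed_vector \<Rightarrow> 'x::real_normed_vector) \<Rightarrow> ('d \<Rightarrow> 'x) \<Rightarrow> ('x \<Rightarrow> 'x) \<Rightarrow> bool" where
  "is_spectral_proj0 \<iota> L P \<longleftrightarrow>
     (\<forall>r>0. cspec \<iota> L \<inter> cball 0 r \<subseteq> {0} \<longrightarrow>
        (\<forall>u :: 'x \<times> 'x.
          ((\<lambda>t. cmul (complex_of_real r * cis t)
                   (cpl \<iota> (cres \<iota> L (complex_of_real r * cis t) u)))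
             has_integral (2 * pi) *\<^sub>R cpl P u) {0..2 * pi}))"

definition Fhat ::
  "('d::real_normed_vector \<Rightarrow>\<^sub>L 'x::real_normed_vector) \<Rightarrow> ('d \<Rightarrow>\<^sub>L 'x) \<Rightarrow> (real \<Rightarrow> 'd \<Rightarrow>\<^sub>L 'x)
   \<Rightarrow> ('x \<Rightarrow> real \<Rightarrow> 'x) \<Rightarrow> (nat \<Rightarrow> 'd) \<Rightarrow> (nat \<Rightarrow> 'x \<Rightarrow>\<^sub>L real) \<Rightarrow> 'd \<Rightarrow> real \<Rightarrow> 'x" where
  "Fhat \<iota> L0 L1 Q chi chis V \<mu> =
     L0 V - (chis 1) (\<iota> V) *\<^sub>R \<iota> (chi 0)
     + \<mu> *\<^sub>R (L1 \<mu> V - (chis 0) (L1 \<mu> V) *\<^sub>R \<iota> (chi 0))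
     + Q (\<iota> V) \<mu> - (chis 0) (Q (\<iota> V) \<mu>) *\<^sub>R \<iota> (chi 0)"

end

theory Submission
  imports Defs
begin

(* J_mu is invariant under translation along chi_0, so its derivative, which exists because J is
   analytic, annihilates chi_0.  The modified field Fhat differs from F only by a multiple of chi_0,
   hence DJ_mu(V) Fhat(V, mu) = DJ_mu(V) F(V, mu) = 0 by the conservation law. *)

lemma has_derivative_at_if_quadratic_remainder:
  fixes f :: "'a::real_normed_vector \<Rightarrow> 'b::real_normed_vector"
  assumes D: "bounded_linear D" and s: "s > 0" and K: "K \<ge> 0"
    and rem: "\<And>h. norm h < s \<Longrightarrow> norm (f (p + h) - f p - D h) \<le> K * (norm h)\<^sup>2"
  shows "(f has_derivative D) (at p)"
  unfolding has_derivative_at_alt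
proof (intro conjI D allI impI)
  fix e :: real assume e: "e > 0"
  define d where "d = min s (e / (K + 1))"
  have d: "d > 0" using s e K by (simp add: d_def)
  have "norm (f y - f p - D (y - p)) \<le> e * norm (y - p)" if y: "norm (y - p) < d" for y
  proof -
    have "norm (f y - f p - D (y - p)) \<le> K * (norm (y - p))\<^sup>2"
      using rem[of "y - p"] y by (simp add: d_def)
    also have "\<dots> \<le> ((K + 1) * norm (y - p)) * norm (y - p)"
      by (simp add: power2_eq_square algebra_simps)
    also have "\<dots> \<le> e * norm (y - p)"
      using y K by (intro mult_right_mono) (simp_all add: d_def field_simps)
    finally show ?thesis .
  qed
  then show "\<exists>d>0. \<forall>y. norm (y - p) < d \<longrightarrow> norm (f y - f p - D (y - p)) \<le> e * norm (y - p)"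
    using d by blast
qed

lemma power_series_quadratic_remainder:
  fixes P :: "nat \<Rightarrow> 'a::real_normed_vector \<Rightarrow> 'b::banach"
  assumes C: "\<And>n. C n \<ge> 0" and bnd: "\<And>n h. norm (P n h) \<le> C n * norm h ^ n"
    and summ: "summable (\<lambda>n. C n * s ^ n)" and s: "s > 0"
    and ser: "(\<lambda>n. P n h) sums y" and h: "norm h < s"
  shows "norm (y - P 0 h - P 1 h) \<le> (\<Sum>n. C n * s ^ n) / s\<^sup>2 * (norm h)\<^sup>2"
proof -
  define b where "b n = (norm h / s)\<^sup>2 * (C n * s ^ n)" for n
  have b: "summable b" unfolding b_def using summ by (rule summable_mult)
  have b_tail: "summable (\<lambda>n. b (n + 2))" using b by (rule summable_ignore_initial_segment)
  have P_tail_le: "norm (P (n + 2) h) \<le> b (n + 2)" for n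
  proof -
    have "norm h ^ (n + 2) = (norm h)\<^sup>2 * norm h ^ n" by (simp only: power_add mult.commute)
    also have "\<dots> \<le> (norm h)\<^sup>2 * s ^ n" using h by (intro mult_left_mono power_mono) simp_all
    also have "\<dots> = (norm h / s)\<^sup>2 * s ^ (n + 2)" using s by (simp add: power_add power2_eq_square field_simps)
    finally have "C (n + 2) * norm h ^ (n + 2) \<le> C (n + 2) * ((norm h / s)\<^sup>2 * s ^ (n + 2))"
      using C by (rule mult_left_mono)
    with bnd[of "n + 2" h] show ?thesis unfolding b_def by (simp add: algebra_simps)
  qed
  have P_tail: "summable (\<lambda>n. norm (P (n + 2) h))"
    by (rule summable_comparison_test[OF _ b_tail]) (use P_tail_le in auto)
  have "(\<lambda>n. P (n + 2) h) sums (y - (\<Sum>i<2. P i h))"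
    using sums_split_initial_segment[OF ser, of 2] by simp
  then have "norm (y - P 0 h - P 1 h) = norm (\<Sum>n. P (n + 2) h)"
    by (auto simp: sums_iff numeral_2_eq_2 diff_diff_eq)
  also have "\<dots> \<le> (\<Sum>n. norm (P (n + 2) h))" by (rule summable_norm[OF P_tail])
  also have "\<dots> \<le> (\<Sum>n. b (n + 2))" by (rule suminf_le[OF P_tail_le P_tail b_tail])
  also have "\<dots> \<le> suminf b"
  proof -
    have "(\<Sum>i<2. b i) \<ge> 0" unfolding b_def using C s by (intro sum_nonneg) simp
    then show ?thesis using suminf_minus_initial_segment[OF b, of 2] by simp
  qed
  also have "suminf b = (\<Sum>n. C n * s ^ n) / s\<^sup>2 * (norm h)\<^sup>2"
    unfolding b_def suminf_mult[OF summ] by (simp add: power_divide)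
  finally show ?thesis .
qed

lemma power_series_has_derivative:
  fixes P :: "nat \<Rightarrow> 'a::real_normed_vector \<Rightarrow> 'b::banach"
  assumes r: "r > 0" and C: "\<And>n. C n \<ge> 0"
    and bnd: "\<And>n h. norm (P n h) \<le> C n * norm h ^ n"
    and summ: "summable (\<lambda>n. C n * r ^ n)"
    and P0_const: "\<And>h. P 0 h = P 0 0" and P1: "bounded_linear (P 1)"
    and ser: "\<And>h. norm h < r \<Longrightarrow> (\<lambda>n. P n h) sums f (p + h)"
  shows "(f has_derivative P 1) (at p)"
proof -
  define s where "s = r / 2"
  have s: "s > 0" "s < r" using r by (simp_all add: s_def)
  have summ_s: "summable (\<lambda>n. C n * s ^ n)"
    using s C by (intro summable_comparison_test[OF _ summ]) (auto intro!: mult_left_mono power_mono)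
  have "P (Suc n) 0 = 0" for n using bnd[of "Suc n" 0] by simp
  then have "(\<lambda>n. P n 0) sums P 0 0" using sums_Suc_iff[of "\<lambda>n. P n 0" 0] by simp
  then have f_p: "f p = P 0 0" using ser[of 0] r sums_unique2 by fastforce
  show ?thesis
  proof (rule has_derivative_at_if_quadratic_remainder[OF P1 \<open>s > 0\<close>])
    show "(\<Sum>n. C n * s ^ n) / s\<^sup>2 \<ge> 0" using C s summ_s by (simp add: suminf_nonneg)
    fix h :: 'a assume "norm h < s"
    with s have "norm (f (p + h) - P 0 h - P 1 h) \<le> (\<Sum>n. C n * s ^ n) / s\<^sup>2 * (norm h)\<^sup>2"
      by (intro power_series_quadratic_remainder[OF C bnd summ_s \<open>s > 0\<close> ser]) simp_all
    then show "norm (f (p + h) - f p - P 1 h) \<le> (\<Sum>n. C n * s ^ n) / s\<^sup>2 * (norm h)\<^sup>2"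
      using P0_const[of h] f_p by simp
  qed
qed

lemma analytic_at_within_partial_differentiable:
  fixes g :: "'a::real_normed_vector \<times> real \<Rightarrow> 'b::banach"
  assumes an: "analytic_at_within g (UNIV \<times> T) (p, \<mu>)" and "\<mu> \<in> T"
  shows "(\<lambda>U. g (U, \<mu>)) differentiable (at p)"
proof -
  obtain M :: "nat \<Rightarrow> (nat \<Rightarrow> 'a \<times> real) \<Rightarrow> 'b" and C r where r: "r > 0"
    and ml: "\<And>n. bmultilin n (M n)"
    and bd: "\<And>n v. norm (M n v) \<le> C n * (\<Prod>i<n. norm (v i))"
    and summ: "summable (\<lambda>n. C n * r ^ n)"
    and ser: "\<And>h. norm h < r \<and> (p, \<mu>) + h \<in> UNIV \<times> T \<Longrightarrow> (\<lambda>n. M n (\<lambda>_. h)) sums g ((p, \<mu>) + h)"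
    using an unfolding analytic_at_within_def by blast
  define P where "P n h = M n (\<lambda>_. (h, 0))" for n h
  have C: "C n \<ge> 0" for n
  proof -
    have "norm (M n (\<lambda>_. (0, 1))) \<le> C n" using bd[of n "\<lambda>_. (0, 1)"] by simp
    then show ?thesis using norm_ge_zero order_trans by blast
  qed
  have bnd: "norm (P n h) \<le> C n * norm h ^ n" for n h
    using bd[of n "\<lambda>_. (h, 0)"] by (simp add: P_def norm_Pair)
  have P0_const: "P 0 h = P 0 0" for h
    using ml[of 0] unfolding bmultilin_def P_def by blast
  have P1_eq: "P 1 h = M 1 ((\<lambda>_. (0, 0))(0 := (h, 0)))" for h
  proof -
    have "\<forall>v w. (\<forall>i<1. v i = w i) \<longrightarrow> M 1 v = M 1 w" using ml[of 1] unfolding bmultilin_def by blast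
    then show ?thesis unfolding P_def by (metis fun_upd_same less_one)
  qed
  have lin: "linear (\<lambda>x. M 1 ((\<lambda>_. (0, 0))(0 := x)))"
    using ml[of 1] unfolding bmultilin_def by blast
  have P1: "bounded_linear (P 1)"
  proof (rule bounded_linear_intro[where K = "C 1"])
    fix x y show "P 1 (x + y) = P 1 x + P 1 y"
      unfolding P1_eq using linear_add[OF lin, of "(x, 0)" "(y, 0)"] by simp
  next
    fix c x show "P 1 (c *\<^sub>R x) = c *\<^sub>R P 1 x"
      unfolding P1_eq using linear_scale[OF lin, of c "(x, 0)"] by simp
  next
    fix x show "norm (P 1 x) \<le> norm x * C 1" using bnd[of 1 x] by (simp add: mult.commute)
  qed
  have "(\<lambda>n. P n h) sums g (p + h, \<mu>)" if "norm h < r" for h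
    using ser[of "(h, 0)"] that \<open>\<mu> \<in> T\<close> by (simp add: P_def norm_Pair)
  then have "((\<lambda>U. g (U, \<mu>)) has_derivative P 1) (at p)"
    by (intro power_series_has_derivative[OF r C bnd summ P0_const P1]) simp
  then show ?thesis unfolding differentiable_def by blast
qed

lemma has_derivative_eq_0_if_constant_along:
  fixes g :: "'a::real_normed_vector \<Rightarrow> 'b::real_normed_vector"
  assumes g: "(g has_derivative D) (at x)" and const: "\<And>t. g (x + t *\<^sub>R v) = g x"
  shows "D v = 0"
proof -
  have "((\<lambda>t. g (x + t *\<^sub>R v)) has_derivative (\<lambda>t. D (t *\<^sub>R v))) (at 0)"
  proof (rule has_derivative_compose[of "\<lambda>t. x + t *\<^sub>R v"])
    show "((\<lambda>t. x + t *\<^sub>R v) has_derivative (\<lambda>t. t *\<^sub>R v)) (at 0)"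
      by (auto intro!: derivative_eq_intros)
    show "(g has_derivative D) (at (x + 0 *\<^sub>R v))" using g by simp
  qed
  moreover have "((\<lambda>t. g (x + t *\<^sub>R v)) has_derivative (\<lambda>t. 0)) (at 0)"
    unfolding const by (rule has_derivative_const)
  ultimately have "(\<lambda>t::real. D (t *\<^sub>R v)) = (\<lambda>t. 0)" by (rule has_derivative_unique)
  then show ?thesis by (metis scaleR_one)
qed

theorem lemma2p5:
  fixes \<iota> :: "'d::banach \<Rightarrow>\<^sub>L 'x::banach"
    and L0 :: "'d \<Rightarrow>\<^sub>L 'x"
    and L1 :: "real \<Rightarrow> ('d \<Rightarrow>\<^sub>L 'x)"
    and Q :: "'x \<Rightarrow> real \<Rightarrow> 'x"
    and S :: "'x \<Rightarrow>\<^sub>L 'x"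
    and chi :: "nat \<Rightarrow> 'd"
    and chis :: "nat \<Rightarrow> ('x \<Rightarrow>\<^sub>L real)"
    and J :: "real \<Rightarrow> 'x \<Rightarrow> real"
    and Jstar :: "real \<Rightarrow> ('x \<Rightarrow>\<^sub>L real)"
    and \<mu>0 \<omega> lam0 :: real
  defines "F \<equiv> (\<lambda>U \<mu>. L0 U + \<mu> *\<^sub>R L1 \<mu> U + Q (\<iota> U) \<mu>)"
  assumes emb: "inj (blinfun_apply \<iota>)"
    and mu0: "\<mu>0 > 0"
    \<comment> \<open>(H1)\<close>
    and L1_an: "ban_analytic_on {0..\<mu>0} L1"
    and Q_an: "ban_analytic_on (UNIV \<times> {0..\<mu>0}) (\<lambda>(U, \<mu>). Q U \<mu>)"
    and Q0: "\<And>\<mu>. \<mu> \<in> {0..\<mu>0} \<Longrightarrow> Q 0 \<mu> = 0"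
    and DQ0: "\<And>\<mu>. \<mu> \<in> {0..\<mu>0} \<Longrightarrow> frechet_derivative (\<lambda>U. Q U \<mu>) (at 0) = (\<lambda>_. 0)"
    \<comment> \<open>(H2)\<close>
    and S_inv: "\<And>U. S (S U) = U"
    and S_norm: "norm S = 1"
    and S_D: "\<And>V. S (\<iota> V) \<in> range \<iota>"
    and S_L0: "\<And>V W. \<iota> W = S (\<iota> V) \<Longrightarrow> S (L0 V) = - L0 W"
    and S_L1: "\<And>\<mu> V W. \<mu> \<in> {0..\<mu>0} \<Longrightarrow> \<iota> W = S (\<iota> V) \<Longrightarrow> S (L1 \<mu> V) = - L1 \<mu> W"
    and S_Q: "\<And>\<mu> V. \<mu> \<in> {0..\<mu>0} \<Longrightarrow> Q (S (\<iota> V)) \<mu> = - S (Q (\<iota> V) \<mu>)"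
    \<comment> \<open>(H3)\<close>
    and omega: "\<omega> > 0"
    and spec_imag: "cspec \<iota> L0 \<inter> {z. Re z = 0} = {0, \<i> * of_real \<omega>, - \<i> * of_real \<omega>}"
    and eig: "\<And>z. z \<in> {0, \<i> * of_real \<omega>, - \<i> * of_real \<omega>} \<Longrightarrow>
                is_eigenvalue \<iota> L0 z \<and> geom_simple \<iota> L0 z"
    and am0: "alg_mult \<iota> L0 0 4"
    and am1: "alg_mult \<iota> L0 (\<i> * of_real \<omega>) 1"
    and am2: "alg_mult \<iota> L0 (- \<i> * of_real \<omega>) 1"
    and lam0: "lam0 > 0"
    and hyp: "\<And>z. z \<in> cspec \<iota> L0 \<Longrightarrow> Re z \<noteq> 0 \<Longrightarrow> \<bar>Re z\<bar> \<ge> lam0"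
    \<comment> \<open>(H4)\<close>
    and proj: "is_spectral_proj0 \<iota> L0 (\<lambda>U. \<Sum>k\<le>3. chis k U *\<^sub>R \<iota> (chi k))"
    and chi0: "L0 (chi 0) = 0"
    and chain: "\<And>k. k < 3 \<Longrightarrow> L0 (chi (Suc k)) = \<iota> (chi k)"
    and L1_chi0: "\<And>\<mu>. \<mu> \<in> {0..\<mu>0} \<Longrightarrow> L1 \<mu> (chi 0) = 0"
    and Q_chi0: "\<And>\<mu> V \<gamma>. \<mu> \<in> {0..\<mu>0} \<Longrightarrow> Q (\<iota> V + \<gamma> *\<^sub>R \<iota> (chi 0)) \<mu> = Q (\<iota> V) \<mu>"
    and S_chi: "\<And>k. k \<le> 3 \<Longrightarrow> S (\<iota> (chi k)) = (-1) ^ (k + 1) *\<^sub>R \<iota> (chi k)"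
    \<comment> \<open>(H5)\<close>
    and J_an: "ban_analytic_on (UNIV \<times> {0..\<mu>0}) (\<lambda>(U, \<mu>). J \<mu> U)"
    and J_cons: "\<And>\<mu> V. \<mu> \<in> {0..\<mu>0} \<Longrightarrow> frechet_derivative (J \<mu>) (at (\<iota> V)) (F V \<mu>) = 0"
    and J_S: "\<And>\<mu> U. \<mu> \<in> {0..\<mu>0} \<Longrightarrow> J \<mu> (S U) = J \<mu> U"
    and J00: "J 0 0 = 0"
    and Jstar_an: "ban_analytic_on {0..\<mu>0} Jstar"
    and J_diff: "\<And>\<mu> V. \<mu> \<in> {0..\<mu>0} \<Longrightarrow> J \<mu> (\<iota> V) - J 0 (\<iota> V) = \<mu> * Jstar \<mu> (\<iota> V)"
    and J_chi0: "\<And>\<mu> V \<gamma>. \<mu> \<in> {0..\<mu>0} \<Longrightarrow> J \<mu> (\<iota> V + \<gamma> *\<^sub>R \<iota> (chi 0)) = J \<mu> (\<iota> V)"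
    and chi3: "\<And>U. chis 3 U = frechet_derivative (J 0) (at 0) U"
  shows "\<forall>\<mu>\<in>{0..\<mu>0}. \<forall>V. chis 0 (\<iota> V) = 0 \<longrightarrow>
           frechet_derivative (J \<mu>) (at (\<iota> V)) (Fhat \<iota> L0 L1 Q chi chis V \<mu>) = 0"
proof (intro ballI allI impI)
  fix \<mu> V assume mu: "\<mu> \<in> {0..\<mu>0}"
  have "analytic_at_within (\<lambda>(U, \<mu>). J \<mu> U) (UNIV \<times> {0..\<mu>0}) (\<iota> V, \<mu>)"
    using J_an mu unfolding ban_analytic_on_def by blast
  from analytic_at_within_partial_differentiable[OF this mu]
  obtain D where J_deriv: "(J \<mu> has_derivative D) (at (\<iota> V))"
    unfolding differentiable_def by auto
  interpret D: bounded_linear D using J_deriv by (rule has_derivative_bounded_linear)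
  have D_chi0: "D (\<iota> (chi 0)) = 0"
    using J_deriv J_chi0[OF mu] by (rule has_derivative_eq_0_if_constant_along)
  have "Fhat \<iota> L0 L1 Q chi chis V \<mu> = F V \<mu>
      - (chis 1 (\<iota> V) + \<mu> * chis 0 (L1 \<mu> V) + chis 0 (Q (\<iota> V) \<mu>)) *\<^sub>R \<iota> (chi 0)"
    unfolding Fhat_def F_def by (simp add: algebra_simps)
  then have "D (Fhat \<iota> L0 L1 Q chi chis V \<mu>) = D (F V \<mu>)"
    by (simp add: D.diff D.scaleR D_chi0)
  also have "\<dots> = 0" using J_cons[OF mu, of V] frechet_derivative_at[OF J_deriv] by simp
  finally show "frechet_derivative (J \<mu>) (at (\<iota> V)) (Fhat \<iota> L0 L1 Q chi chis V \<mu>) = 0"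
    using frechet_derivative_at[OF J_deriv] by simp
qed

end
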